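(* Let $n_1,n_2,n_3\in\mathbb{N}$, let $\sigma$ be a segment label map on $G=\{1,\dots,n_1\}\times\{1,\dots,n_2\}\times\{1,\dots,n_3\}$, fix any decomposition of $T$ into blocks, let $\tau=\mathrm{LABEL}(\sigma,T)$ and let $\tau'$ be the output of the block-wise method. Then for all 1-cells $u,v\in T$: $\tau'(u)=\tau'(v)\Rightarrow\tau(u)=\tau(v)$.
   Context: Voxel grid and segmentation: $G=\{1,\dots,n_1\}\times\{1,\dots,n_2\}\times\{1,\dots,n_3\}$; voxels $v,w$ are adjacent iff $\sum_i|v_i-w_i|=1$. A segment label map is $\sigma:G\to\mathbb{N}=\{1,2,\dots\}$ such that each level set $\sigma^{-1}(l)$ is connected w.r.t. this adjacency. Topological grid: $T=\{1,\dots,2n_1-1\}\times\{1,\dots,2n_2-1\}\times\{1,\dots,2n_3-1\}$; a cell with exactly $j$ odd coordinates is a $j$-cell. Voxel $r$ corresponds to the 3-cell $2r-1$. Two cells are 6-neighbors if they differ by $1$ in exactly one coordinate. For a $j$-cell $t$, $\Gamma(t)$ is the set of 6-neighbors of $t$ in $T$ that are $(j+1)$-cells. Cells $t_1,t_2$ are connected, $t_1\leftrightarrow t_2$, iff there is $t\in T$ with $t_1,t_2\in\Gamma(t)$. Procedure LABEL: for a voxel box $\prod_i\{a_i,\dots,b_i\}\subseteq G$ let $B=\prod_i\{2a_i-1,\dots,2b_i-1\}$ be its cell box. $\mathrm{LABEL}(\sigma,B)$ produces $\lambda:B\to\mathbb{N}_0$: (1) $\lambda(2r-1)=\sigma(r)$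 for 3-cells. (2) For $j=2,1,0$ in this order: for each $j$-cell $t\in B$ let $\theta(t)$ be the set of positive integers occurring exactly once in $(\lambda(s))_{s\in\Gamma(t)}$; $t$ is active iff $\theta(t)\ne\emptyset$, inactive $j$-cells get label $0$; the active $j$-cells of $B$ are partitioned into maximal sets of cells with equal $\theta$ that are connected by $\leftrightarrow$-paths inside the set; these classes are numbered $1,\dots,m_j(B)$ arbitrarily and each active $j$-cell gets its class number. Reference labeling: $\tau=\mathrm{LABEL}(\sigma,T)$. Block-wise method: for each axis $i$ choose odd integers $1=a^i_0<\dots<a^i_{m_i}=2n_i-1$; blocks are the boxes $\prod_i\{a^i_{k_i-1},\dots,a^i_{k_i}\}$. Step 1: $\lambda_B=\mathrm{LABEL}(\sigma,B)$ for each block. Step 2: with blocks ordered $B_1,\dots,B_K$, add offset $\sum_{k'<k}m_j(B_{k'})$ to each positive $j$-cell label of $\lambda_{B_k}$ ($j\in\{0,1,2\}$). Step 3: for $j\in\{1,2\}$, via union–find, unite the labels received in different blocks by any active $j$-cell lying in several blocks, and replace every positive $j$-cell label by its set representative. Step 4: for each 0-cell $t_0$ and each pair of distinct 1-cell labels occurring exactly once among the current labels of $\Gamma(t_0)$, merge the two labels if the corresponding 1-cells bound the same set of current 2-cell labels; if any merge took place at $t_0$, recompute the activity of $t_0$ and set its label to $0$ if inactive. The result is $\tau':T\to\mathbb{N}_0$. *)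

theory Defs
  imports Main
begin

type_synonym cell = "int \<times> int \<times> int"

definition grid :: "nat \<Rightarrow> nat \<Rightarrow> nat \<Rightarrow> cell set" where
  "grid n1 n2 n3 = {1..int n1} \<times> {1..int n2} \<times> {1..int n3}"

definition tgrid :: "nat \<Rightarrow> nat \<Rightarrow> nat \<Rightarrow> cell set" where
  "tgrid n1 n2 n3 = {1..2 * int n1 - 1} \<times> {1..2 * int n2 - 1} \<times> {1..2 * int n3 - 1}"

definition l1dist :: "cell \<Rightarrow> cell \<Rightarrow> int" where
  "l1dist v w = (case v of (a1, a2, a3) \<Rightarrow> case w of (b1, b2, b3) \<Rightarrow>
      \<bar>a1 - b1\<bar> + \<bar>a2 - b2\<bar> + \<bar>a3 - b3\<bar>)"

definition voxel_adj :: "cell \<Rightarrow> cell \<Rightarrow> bool" where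
  "voxel_adj v w = (l1dist v w = 1)"

definition segment_label_map :: "cell set \<Rightarrow> (cell \<Rightarrow> nat) \<Rightarrow> bool" where
  "segment_label_map G \<sigma> =
     ((\<forall>v\<in>G. 1 \<le> \<sigma> v) \<and>
      (\<forall>v\<in>G. \<forall>w\<in>G. \<sigma> v = \<sigma> w \<longrightarrow>
         (\<lambda>x y. x \<in> G \<and> y \<in> G \<and> \<sigma> x = \<sigma> v \<and> \<sigma> y = \<sigma> v \<and> voxel_adj x y)\<^sup>*\<^sup>* v w))"

text \<open>Number of odd coordinates: a cell with j odd coordinates is a j-cell.\<close>
definition dim_cell :: "cell \<Rightarrow> nat" where
  "dim_cell t = (case t of (a, b, c) \<Rightarrow>
     (if odd a then 1 else 0) + (if odd b then 1 else 0) + (if odd c then 1 else 0))"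

definition six_nbr :: "cell \<Rightarrow> cell \<Rightarrow> bool" where
  "six_nbr s t = (l1dist s t = 1)"

definition Gamma :: "cell set \<Rightarrow> cell \<Rightarrow> cell set" where
  "Gamma T t = {s \<in> T. six_nbr t s \<and> dim_cell s = dim_cell t + 1}"

definition cell_conn :: "cell set \<Rightarrow> cell \<Rightarrow> cell \<Rightarrow> bool" where
  "cell_conn T t1 t2 = (\<exists>t\<in>T. t1 \<in> Gamma T t \<and> t2 \<in> Gamma T t)"

text \<open>Voxel r corresponds to the 3-cell 2r-1.\<close>
definition voxel_of :: "cell \<Rightarrow> cell" where
  "voxel_of t = (case t of (a, b, c) \<Rightarrow> ((a + 1) div 2, (b + 1) div 2, (c + 1) div 2))"

section \<open>Procedure LABEL (as a relation: numbering of classes is arbitrary)\<close>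

definition theta :: "cell set \<Rightarrow> (cell \<Rightarrow> nat) \<Rightarrow> cell \<Rightarrow> nat set" where
  "theta T lam t = {l. 0 < l \<and> card {s \<in> Gamma T t. lam s = l} = 1}"

definition active_cells :: "cell set \<Rightarrow> (cell \<Rightarrow> nat) \<Rightarrow> cell set \<Rightarrow> nat \<Rightarrow> cell set" where
  "active_cells T lam B j = {t \<in> B. dim_cell t = j \<and> theta T lam t \<noteq> {}}"

definition same_class :: "cell set \<Rightarrow> (cell \<Rightarrow> nat) \<Rightarrow> cell set \<Rightarrow> nat \<Rightarrow> cell \<Rightarrow> cell \<Rightarrow> bool" where
  "same_class T lam B j t t' =
     (t \<in> active_cells T lam B j \<and> t' \<in> active_cells T lam B j \<and>
      theta T lam t = theta T lam t' \<and>
      (\<lambda>x y. x \<in> active_cells T lam B j \<and> y \<in> active_cells T lam B j \<and>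
             theta T lam x = theta T lam t \<and> theta T lam y = theta T lam t \<and>
             cell_conn T x y)\<^sup>*\<^sup>* t t')"

text \<open>is_LABEL T sigma B lam: lam is a possible output of LABEL(sigma, B) (on B), where
  T is the full topological grid.\<close>
definition is_LABEL :: "cell set \<Rightarrow> (cell \<Rightarrow> nat) \<Rightarrow> cell set \<Rightarrow> (cell \<Rightarrow> nat) \<Rightarrow> bool" where
  "is_LABEL T \<sigma> B lam =
     ((\<forall>t\<in>B. dim_cell t = 3 \<longrightarrow> lam t = \<sigma> (voxel_of t)) \<and>
      (\<forall>j\<in>{0, 1, 2}.
         (\<forall>t\<in>B. dim_cell t = j \<and> theta T lam t = {} \<longrightarrow> lam t = 0) \<and>
         lam ` active_cells T lam B j = {1..card (lam ` active_cells T lam B j)} \<and>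
         (\<forall>t\<in>active_cells T lam B j. \<forall>t'\<in>active_cells T lam B j.
             lam t = lam t' \<longleftrightarrow> same_class T lam B j t t')))"

definition num_classes :: "cell set \<Rightarrow> (cell \<Rightarrow> nat) \<Rightarrow> cell set \<Rightarrow> nat \<Rightarrow> nat" where
  "num_classes T lam B j = card (lam ` active_cells T lam B j)"

definition valid_cuts :: "int \<Rightarrow> int list \<Rightarrow> bool" where
  "valid_cuts N cs = (sorted_wrt (<) cs \<and> 2 \<le> length cs \<and> hd cs = 1 \<and> last cs = N \<and>
                      (\<forall>a\<in>set cs. odd a))"

definition block_family :: "int list \<Rightarrow> int list \<Rightarrow> int list \<Rightarrow> cell set set" where
  "block_family c1 c2 c3 =
     {{c1 ! (k1 - 1) .. c1 ! k1} \<times> {c2 ! (k2 - 1) .. c2 ! k2} \<times> {c3 ! (k3 - 1) .. c3 ! k3} | k1 k2 k3.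
        0 < k1 \<and> k1 < length c1 \<and> 0 < k2 \<and> k2 < length c2 \<and> 0 < k3 \<and> k3 < length c3}"

definition offset :: "cell set \<Rightarrow> (nat \<Rightarrow> cell \<Rightarrow> nat) \<Rightarrow> cell set list \<Rightarrow> nat \<Rightarrow> nat \<Rightarrow> nat" where
  "offset T lams Bs j k = (\<Sum>k'<k. num_classes T (lams k') (Bs ! k') j)"

definition lab2 :: "cell set \<Rightarrow> (nat \<Rightarrow> cell \<Rightarrow> nat) \<Rightarrow> cell set list \<Rightarrow> nat \<Rightarrow> cell \<Rightarrow> nat" where
  "lab2 T lams Bs k t = (if 0 < lams k t then lams k t + offset T lams Bs (dim_cell t) k else 0)"

text \<open>Step 3: union-find over labels received by the same j-cell in different blocks.\<close>
definition uf_rel :: "cell set \<Rightarrow> (nat \<Rightarrow> cell \<Rightarrow> nat) \<Rightarrow> cell set list \<Rightarrow> nat \<Rightarrow> (nat \<times> nat) set" where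
  "uf_rel T lams Bs j =
     {(lab2 T lams Bs k t, lab2 T lams Bs k' t) | k k' t.
        k < length Bs \<and> k' < length Bs \<and> t \<in> Bs ! k \<and> t \<in> Bs ! k' \<and> dim_cell t = j \<and>
        0 < lams k t \<and> 0 < lams k' t}"

definition equiv_closure :: "(nat \<times> nat) set \<Rightarrow> (nat \<times> nat) set" where
  "equiv_closure R = (R \<union> R\<inverse>)\<^sup>*"

definition is_set_rep :: "(nat \<times> nat) set \<Rightarrow> (nat \<Rightarrow> nat) \<Rightarrow> bool" where
  "is_set_rep E r = (\<forall>x. (x, r x) \<in> E \<and> (\<forall>y. (x, y) \<in> E \<longrightarrow> r y = r x))"

definition lab3 :: "cell set \<Rightarrow> (nat \<Rightarrow> cell \<Rightarrow> nat) \<Rightarrow> cell set list \<Rightarrow> (nat \<Rightarrow> nat \<Rightarrow> nat)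
                    \<Rightarrow> cell \<Rightarrow> nat" where
  "lab3 T lams Bs r t =
     (if \<exists>k<length Bs. t \<in> Bs ! k \<and> 0 < lams k t
      then r (dim_cell t) (lab2 T lams Bs (SOME k. k < length Bs \<and> t \<in> Bs ! k \<and> 0 < lams k t) t)
      else 0)"

text \<open>Step 4. L = current (step-3) labels; M = equivalence of 1-cell labels produced by the
  merges so far (current labels of two 1-cells are equal iff their step-3 labels are M-related).\<close>
definition once_in :: "cell set \<Rightarrow> (cell \<Rightarrow> nat) \<Rightarrow> (nat \<times> nat) set \<Rightarrow> cell \<Rightarrow> cell \<Rightarrow> bool" where
  "once_in T L M t0 u =
     (u \<in> Gamma T t0 \<and> 0 < L u \<and> card {u' \<in> Gamma T t0. 0 < L u' \<and> (L u', L u) \<in> M} = 1)"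

definition face_labels :: "cell set \<Rightarrow> (cell \<Rightarrow> nat) \<Rightarrow> cell \<Rightarrow> nat set" where
  "face_labels T L u = {L s | s. s \<in> Gamma T u \<and> 0 < L s}"

definition merge_pairs :: "cell set \<Rightarrow> (cell \<Rightarrow> nat) \<Rightarrow> (nat \<times> nat) set \<Rightarrow> cell \<Rightarrow> (nat \<times> nat) set" where
  "merge_pairs T L M t0 =
     {(L u, L v) | u v. once_in T L M t0 u \<and> once_in T L M t0 v \<and> (L u, L v) \<notin> M \<and>
                        face_labels T L u = face_labels T L v}"

definition step4 :: "cell set \<Rightarrow> (cell \<Rightarrow> nat) \<Rightarrow> (nat \<times> nat) set \<Rightarrow> cell \<Rightarrow> (nat \<times> nat) set" where
  "step4 T L M t0 = equiv_closure (M \<union> merge_pairs T L M t0)"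

text \<open>tau' is (on 1-cells) a possible output of the block-wise method, for some block
  decomposition, block order, LABEL outputs, union-find representatives and 0-cell order.\<close>
definition blockwise_output :: "nat \<Rightarrow> nat \<Rightarrow> nat \<Rightarrow> (cell \<Rightarrow> nat) \<Rightarrow> (cell \<Rightarrow> nat) \<Rightarrow> bool" where
  "blockwise_output n1 n2 n3 \<sigma> tau' =
     (let T = tgrid n1 n2 n3 in
      \<exists>c1 c2 c3 Bs lams r order r4.
        valid_cuts (2 * int n1 - 1) c1 \<and> valid_cuts (2 * int n2 - 1) c2 \<and>
        valid_cuts (2 * int n3 - 1) c3 \<and>
        distinct Bs \<and> set Bs = block_family c1 c2 c3 \<and>
        (\<forall>k<length Bs. is_LABEL T \<sigma> (Bs ! k) (lams k)) \<and>
        (\<forall>j\<in>{1, 2}. is_set_rep (equiv_closure (uf_rel T lams Bs j)) (r j)) \<and>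
        distinct order \<and> set order = {t \<in> T. dim_cell t = 0} \<and>
        is_set_rep (fold (\<lambda>t0 M. step4 T (lab3 T lams Bs r) M t0) order Id) r4 \<and>
        (\<forall>u\<in>T. dim_cell u = 1 \<longrightarrow> tau' u = r4 (lab3 T lams Bs r u)))"

end

theory Submission
  imports Defs
begin

text \<open>Every block is an odd box, so it contains all upper neighbours of its cells and its
  3-cells carry the labels of \<open>\<sigma>\<close>. Hence a 2-cell has the same \<open>\<theta>\<close> in a block as in \<open>T\<close>, and
  two faces of a 1-cell get the same block label iff they get the same reference label
  (they are \<open>\<leftrightarrow>\<close>-connected through the 1-cell). So the \<open>\<theta>\<close> of a 1-cell in \<open>T\<close> is the image of
  its \<open>\<theta>\<close> in the block, and each block class lies inside one reference class. The offsets make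
  block labels globally distinct, and union-find only identifies labels of one cell, so every
  step-3 label decodes to a reference label. For step 4: the faces of a 1-cell \<open>u\<close> form a
  4-cycle whose \<open>\<theta>\<close>'s are the pairs of distinct neighbouring voxel labels; if \<open>u\<close> is active in
  \<open>\<tau>\<close>, some such pair occurs once, which forces the positive face labels of \<open>u\<close> to be
  pairwise distinct. Then \<open>\<theta>(u)\<close> is the set of positive face labels of \<open>u\<close>, so two 1-cells
  through a common 0-cell with equal face labels have equal \<open>\<theta>\<close>, are connected, and already
  share their reference label.\<close>

section \<open>Odd boxes\<close>

definition odd_box :: "cell set \<Rightarrow> bool" where
  "odd_box B \<longleftrightarrow> (\<exists>a1 b1 a2 b2 a3 b3. B = {a1..b1} \<times> {a2..b2} \<times> {a3..b3} \<and>
      odd a1 \<and> odd b1 \<and> odd a2 \<and> odd b2 \<and> odd a3 \<and> odd b3)"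

lemma l1dist_eq_1_iff:
  "l1dist (a,b,c) (x,y,z) = 1 \<longleftrightarrow>
    ((x = a-1 \<or> x = a+1) \<and> y = b \<and> z = c) \<or> (x = a \<and> (y = b-1 \<or> y = b+1) \<and> z = c) \<or>
    (x = a \<and> y = b \<and> (z = c-1 \<or> z = c+1))"
  unfolding l1dist_def by (simp add: abs_if) arith

lemma dim_cell_triple:
  "dim_cell (a,b,c) = (if odd a then 1 else 0) + (if odd b then 1 else 0) + (if odd c then 1 else 0)"
  by (simp add: dim_cell_def)

lemma Gamma_triple:
  "Gamma B (a,b,c) = {s \<in> B. s \<in>
     (if even a then {(a-1,b,c),(a+1,b,c)} else {}) \<union>
     (if even b then {(a,b-1,c),(a,b+1,c)} else {}) \<union>
     (if even c then {(a,b,c-1),(a,b,c+1)} else {})}"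
  unfolding Gamma_def six_nbr_def
proof (rule Collect_cong)
  fix s :: cell
  obtain x y z where "s = (x,y,z)" by (cases s)
  then show "(s \<in> B \<and> l1dist (a,b,c) s = 1 \<and> dim_cell s = dim_cell (a,b,c) + 1) =
    (s \<in> B \<and> s \<in> (if even a then {(a-1,b,c),(a+1,b,c)} else {}) \<union>
     (if even b then {(a,b-1,c),(a,b+1,c)} else {}) \<union>
     (if even c then {(a,b,c-1),(a,b,c+1)} else {}))"
    by (simp only: l1dist_eq_1_iff) (auto simp: dim_cell_triple)
qed

lemma odd_box_upper_neighbours:
  assumes "odd_box B" "(a,b,c) \<in> B"
  shows "even a \<Longrightarrow> (a-1,b,c) \<in> B \<and> (a+1,b,c) \<in> B"
    and "even b \<Longrightarrow> (a,b-1,c) \<in> B \<and> (a,b+1,c) \<in> B"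
    and "even c \<Longrightarrow> (a,b,c-1) \<in> B \<and> (a,b,c+1) \<in> B"
proof -
  obtain a1 b1 a2 b2 a3 b3 where B: "B = {a1..b1} \<times> {a2..b2} \<times> {a3..b3}"
    and odd: "odd a1" "odd b1" "odd a2" "odd b2" "odd a3" "odd b3"
    using assms(1) unfolding odd_box_def by blast
  have range: "a1 \<le> a" "a \<le> b1" "a2 \<le> b" "b \<le> b2" "a3 \<le> c" "c \<le> b3"
    using assms(2) B by auto
  have "even a \<Longrightarrow> a1 \<le> a - 1 \<and> a + 1 \<le> b1"
    and "even b \<Longrightarrow> a2 \<le> b - 1 \<and> b + 1 \<le> b2"
    and "even c \<Longrightarrow> a3 \<le> c - 1 \<and> c + 1 \<le> b3"
    using odd range by presburger+
  then show "even a \<Longrightarrow> (a-1,b,c) \<in> B \<and> (a+1,b,c) \<in> B"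
    and "even b \<Longrightarrow> (a,b-1,c) \<in> B \<and> (a,b+1,c) \<in> B"
    and "even c \<Longrightarrow> (a,b,c-1) \<in> B \<and> (a,b,c+1) \<in> B"
    using range by (auto simp: B)
qed

lemma Gamma_odd_box:
  assumes "odd_box B" "(a,b,c) \<in> B"
  shows "Gamma B (a,b,c) =
     (if even a then {(a-1,b,c),(a+1,b,c)} else {}) \<union>
     (if even b then {(a,b-1,c),(a,b+1,c)} else {}) \<union>
     (if even c then {(a,b,c-1),(a,b,c+1)} else {})"
  unfolding Gamma_triple using odd_box_upper_neighbours[OF assms] by auto

lemma Gamma_subset_odd_box:
  assumes "odd_box B" "t \<in> B"
  shows "Gamma T t \<subseteq> B"
proof -
  obtain a b c where t: "t = (a,b,c)" by (cases t) auto
  show ?thesis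
    unfolding t Gamma_triple using odd_box_upper_neighbours[OF assms(1)] assms(2) t by auto
qed

lemma Gamma_memD:
  assumes "s \<in> Gamma T t"
  shows "s \<in> T" and "dim_cell s = dim_cell t + 1"
  using assms by (simp_all add: Gamma_def)

lemma is_LABEL_3cell:
  assumes "is_LABEL T \<sigma> B lam" "t \<in> B" "dim_cell t = 3"
  shows "lam t = \<sigma> (voxel_of t)"
  using assms unfolding is_LABEL_def by blast

lemma is_LABEL_pos_iff:
  assumes L: "is_LABEL T \<sigma> B lam" and t: "t \<in> B" "dim_cell t = j" "j \<in> {0,1,2}"
  shows "0 < lam t \<longleftrightarrow> theta T lam t \<noteq> {}"
proof
  assume "0 < lam t"
  then show "theta T lam t \<noteq> {}" using L t unfolding is_LABEL_def by auto
next
  assume "theta T lam t \<noteq> {}"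
  then have "t \<in> active_cells T lam B j" using t by (auto simp: active_cells_def)
  then have "lam t \<in> {1..card (lam ` active_cells T lam B j)}"
    using L t unfolding is_LABEL_def by blast
  then show "0 < lam t" by auto
qed

lemma is_LABEL_active:
  assumes "is_LABEL T \<sigma> B lam" "t \<in> B" "dim_cell t = j" "j \<in> {0,1,2}" "0 < lam t"
  shows "t \<in> active_cells T lam B j"
  using is_LABEL_pos_iff[OF assms(1-4)] assms by (auto simp: active_cells_def)

lemma is_LABEL_le_num_classes:
  assumes L: "is_LABEL T \<sigma> B lam" and t: "t \<in> B" "dim_cell t = j" "j \<in> {0,1,2}" "0 < lam t"
  shows "lam t \<le> num_classes T lam B j"
proof -
  have "lam t \<in> lam ` active_cells T lam B j" using is_LABEL_active[OF assms] by blast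
  then have "lam t \<in> {1..card (lam ` active_cells T lam B j)}" using L t unfolding is_LABEL_def by blast
  then show ?thesis by (simp add: num_classes_def)
qed

lemma is_LABEL_eq_iff_same_class:
  assumes "is_LABEL T \<sigma> B lam" "j \<in> {0,1,2}"
    and "t \<in> active_cells T lam B j" "t' \<in> active_cells T lam B j"
  shows "lam t = lam t' \<longleftrightarrow> same_class T lam B j t t'"
  using assms unfolding is_LABEL_def by blast

text \<open>Cells with a common upper neighbour are \<open>\<leftrightarrow>\<close>-connected.\<close>

lemma is_LABEL_adjacent_eq_iff:
  assumes L: "is_LABEL T \<sigma> B lam" and j: "j \<in> {0,1,2}" and u: "u \<in> T"
    and s: "s \<in> Gamma T u" "s' \<in> Gamma T u" "s \<in> B" "s' \<in> B" "dim_cell s = j"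
    and pos: "0 < lam s"
  shows "lam s = lam s' \<longleftrightarrow> theta T lam s = theta T lam s'"
proof -
  have dim': "dim_cell s' = j" using s Gamma_memD(2) by metis
  have act: "s \<in> active_cells T lam B j" using is_LABEL_active[OF L s(3,5) j pos] .
  show ?thesis
  proof
    assume eq: "lam s = lam s'"
    have "s' \<in> active_cells T lam B j" using is_LABEL_active[OF L s(4) dim' j] pos eq by simp
    then have "same_class T lam B j s s'" using is_LABEL_eq_iff_same_class[OF L j act] eq by blast
    then show "theta T lam s = theta T lam s'" unfolding same_class_def by blast
  next
    assume eq: "theta T lam s = theta T lam s'"
    then have act': "s' \<in> active_cells T lam B j"
      using act s(4) dim' by (simp add: active_cells_def)
    have "cell_conn T s s'" unfolding cell_conn_def using s u by blast
    then have "same_class T lam B j s s'"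
      unfolding same_class_def using act act' eq by (auto intro!: r_into_rtranclp)
    then show "lam s = lam s'" using is_LABEL_eq_iff_same_class[OF L j act act'] by blast
  qed
qed

lemma theta_cong:
  assumes "\<forall>x\<in>Gamma T t. lam x = lam' x"
  shows "theta T lam t = theta T lam' t"
proof -
  have "\<And>l. {s \<in> Gamma T t. lam s = l} = {s \<in> Gamma T t. lam' s = l}" using assms by auto
  then show ?thesis unfolding theta_def by simp
qed

lemma theta_memD:
  assumes "l \<in> theta T lam u"
  shows "0 < l" and "\<exists>s\<in>Gamma T u. lam s = l"
proof -
  have "card {x \<in> Gamma T u. lam x = l} = 1" using assms by (simp add: theta_def)
  then have "{x \<in> Gamma T u. lam x = l} \<noteq> {}" by (metis card.empty zero_neq_one)
  then show "\<exists>s\<in>Gamma T u. lam s = l" by blast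
  show "0 < l" using assms by (simp add: theta_def)
qed

lemma same_class_mono:
  assumes sc: "same_class T lam B j t t'"
    and h: "\<And>x. x \<in> active_cells T lam B j \<Longrightarrow> theta T lam x = theta T lam t \<Longrightarrow>
               x \<in> active_cells T lam' B' j \<and> theta T lam' x = theta T lam' t"
  shows "same_class T lam' B' j t t'"
proof -
  let ?R = "\<lambda>x y. x \<in> active_cells T lam B j \<and> y \<in> active_cells T lam B j \<and>
             theta T lam x = theta T lam t \<and> theta T lam y = theta T lam t \<and> cell_conn T x y"
  let ?R' = "\<lambda>x y. x \<in> active_cells T lam' B' j \<and> y \<in> active_cells T lam' B' j \<and>
             theta T lam' x = theta T lam' t \<and> theta T lam' y = theta T lam' t \<and> cell_conn T x y"
  have "?R\<^sup>*\<^sup>* t t'" using sc unfolding same_class_def by blast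
  moreover have "?R \<le> ?R'" using h by auto
  ultimately have "?R'\<^sup>*\<^sup>* t t'" using rtranclp_mono by blast
  moreover have "t \<in> active_cells T lam' B' j" "t' \<in> active_cells T lam' B' j"
    "theta T lam' t = theta T lam' t'"
    using h[of t] h[of t'] sc unfolding same_class_def by auto
  ultimately show ?thesis unfolding same_class_def by blast
qed

lemma is_LABEL_eq_transfer:
  assumes L: "is_LABEL T \<sigma> B lam" and L': "is_LABEL T \<sigma> B' lam'" and "B \<subseteq> B'"
    and j: "j \<in> {0,1,2}"
    and theta': "\<And>x. x \<in> B \<Longrightarrow> dim_cell x = j \<Longrightarrow> theta T lam' x = F ` theta T lam x"
    and t: "t \<in> B" "t' \<in> B" "dim_cell t = j" "dim_cell t' = j" "0 < lam t" "lam t = lam t'"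
  shows "lam' t = lam' t'"
proof -
  have act: "t \<in> active_cells T lam B j" "t' \<in> active_cells T lam B j"
    using is_LABEL_active[OF L] t j by auto
  have "same_class T lam B j t t'" using is_LABEL_eq_iff_same_class[OF L j act] t by blast
  then have sc: "same_class T lam' B' j t t'"
  proof (rule same_class_mono)
    fix x assume "x \<in> active_cells T lam B j" "theta T lam x = theta T lam t"
    then show "x \<in> active_cells T lam' B' j \<and> theta T lam' x = theta T lam' t"
      using theta'[of x] theta'[of t] t \<open>B \<subseteq> B'\<close> by (auto simp: active_cells_def)
  qed
  moreover have "t \<in> active_cells T lam' B' j" "t' \<in> active_cells T lam' B' j"
    using sc unfolding same_class_def by auto
  ultimately show ?thesis using is_LABEL_eq_iff_same_class[OF L' j] by blast
qed

section \<open>LABEL on a sub-box\<close>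

locale nested_LABEL =
  fixes T \<sigma> B B' lam lam'
  assumes L: "is_LABEL T \<sigma> B lam" and L': "is_LABEL T \<sigma> B' lam'"
    and odd_box: "odd_box B" and sub: "B \<subseteq> B'" and sub': "B' \<subseteq> T"
begin

lemma Gamma_in_block:
  assumes "u \<in> B" "s \<in> Gamma T u"
  shows "s \<in> B" and "dim_cell s = dim_cell u + 1"
  using Gamma_subset_odd_box[OF odd_box assms(1)] Gamma_memD(2) assms by auto

lemma theta_2cell_eq:
  assumes "t \<in> B" "dim_cell t = 2"
  shows "theta T lam t = theta T lam' t"
proof (rule theta_cong, rule ballI)
  fix x assume x: "x \<in> Gamma T t"
  have "x \<in> B" "dim_cell x = 3" using Gamma_in_block[OF assms(1) x] assms(2) by simp_all
  then show "lam x = lam' x"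
    using is_LABEL_3cell[OF L] is_LABEL_3cell[OF L', of x] sub by auto
qed

lemma pos_2cell_iff:
  assumes "t \<in> B" "dim_cell t = 2"
  shows "0 < lam t \<longleftrightarrow> 0 < lam' t"
  using is_LABEL_pos_iff[OF L assms] is_LABEL_pos_iff[OF L', of t 2] theta_2cell_eq[OF assms]
    assms sub by auto

lemma eq_2cell_transfer:
  assumes "t \<in> B" "t' \<in> B" "dim_cell t = 2" "dim_cell t' = 2" "0 < lam t" "lam t = lam t'"
  shows "lam' t = lam' t'"
  using is_LABEL_eq_transfer[OF L L' sub _ _ assms, where F = id] theta_2cell_eq by simp

lemma face_eq_iff:
  assumes u: "u \<in> B" "dim_cell u = 1" and s: "s \<in> Gamma T u" "s' \<in> Gamma T u"
    and pos: "0 < lam s"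
  shows "lam s = lam s' \<longleftrightarrow> lam' s = lam' s'"
proof -
  have uT: "u \<in> T" using u sub sub' by blast
  have sB: "s \<in> B" "s' \<in> B" "dim_cell s = 2" "dim_cell s' = 2"
    using Gamma_in_block[OF u(1)] s u(2) by auto
  have pos': "0 < lam' s" using pos_2cell_iff[OF sB(1,3)] pos by blast
  have "lam s = lam s' \<longleftrightarrow> theta T lam s = theta T lam s'"
    using is_LABEL_adjacent_eq_iff[OF L _ uT s sB(1,2,3) pos] by simp
  also have "\<dots> \<longleftrightarrow> theta T lam' s = theta T lam' s'"
    using theta_2cell_eq sB by simp
  also have "\<dots> \<longleftrightarrow> lam' s = lam' s'"
    using is_LABEL_adjacent_eq_iff[OF L' _ uT s _ _ sB(3) pos'] sB(1,2) sub by auto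
  finally show ?thesis .
qed

lemma face_label_in_theta_iff:
  assumes u: "u \<in> B" "dim_cell u = 1" and s: "s \<in> Gamma T u"
  shows "lam s \<in> theta T lam u \<longleftrightarrow> lam' s \<in> theta T lam' u"
proof -
  have sB: "s \<in> B" "dim_cell s = 2" using Gamma_in_block[OF u(1) s] u(2) by simp_all
  show ?thesis
  proof (cases "0 < lam s")
    case True
    then have "{x \<in> Gamma T u. lam x = lam s} = {x \<in> Gamma T u. lam' x = lam' s}"
      using face_eq_iff[OF u s _ True] by (auto simp: eq_commute)
    then show ?thesis using True pos_2cell_iff[OF sB] by (simp add: theta_def)
  next
    case False
    then show ?thesis using pos_2cell_iff[OF sB] by (simp add: theta_def)
  qed
qed

definition face_map :: "nat \<Rightarrow> nat" where
  "face_map l = lam' (SOME s. s \<in> B \<and> dim_cell s = 2 \<and> lam s = l)"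

lemma face_map_label:
  assumes "s \<in> B" "dim_cell s = 2" "0 < lam s"
  shows "face_map (lam s) = lam' s"
proof -
  let ?s = "SOME x. x \<in> B \<and> dim_cell x = 2 \<and> lam x = lam s"
  have "?s \<in> B \<and> dim_cell ?s = 2 \<and> lam ?s = lam s" by (rule someI[of _ s]) (use assms in auto)
  then show ?thesis unfolding face_map_def using eq_2cell_transfer[of ?s s] assms by auto
qed

lemma theta_1cell_image:
  assumes u: "u \<in> B" "dim_cell u = 1"
  shows "theta T lam' u = face_map ` theta T lam u"
proof
  show "theta T lam' u \<subseteq> face_map ` theta T lam u"
  proof
    fix l assume l: "l \<in> theta T lam' u"
    then obtain s where s: "s \<in> Gamma T u" "lam' s = l" using theta_memD(2) by blast
    have sB: "s \<in> B" "dim_cell s = 2" using Gamma_in_block[OF u(1) s(1)] u(2) by simp_all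
    have "lam s \<in> theta T lam u" using face_label_in_theta_iff[OF u s(1)] l s by simp
    moreover have "face_map (lam s) = l"
      using face_map_label[OF sB] pos_2cell_iff[OF sB] theta_memD(1)[OF l] s by auto
    ultimately show "l \<in> face_map ` theta T lam u" by blast
  qed
next
  show "face_map ` theta T lam u \<subseteq> theta T lam' u"
  proof
    fix l' assume "l' \<in> face_map ` theta T lam u"
    then obtain l where l: "l \<in> theta T lam u" "l' = face_map l" by blast
    then obtain s where s: "s \<in> Gamma T u" "lam s = l" using theta_memD(2) by blast
    have sB: "s \<in> B" "dim_cell s = 2" using Gamma_in_block[OF u(1) s(1)] u(2) by simp_all
    have "face_map l = lam' s" using face_map_label[OF sB] theta_memD(1)[OF l(1)] s by simp
    then show "l' \<in> theta T lam' u" using face_label_in_theta_iff[OF u s(1)] l s by simp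
  qed
qed

lemma pos_1cell_iff:
  assumes "u \<in> B" "dim_cell u = 1"
  shows "0 < lam u \<longleftrightarrow> 0 < lam' u"
  using is_LABEL_pos_iff[OF L assms] is_LABEL_pos_iff[OF L', of u 1] theta_1cell_image[OF assms]
    assms sub by auto

lemma eq_1cell_transfer:
  assumes "t \<in> B" "t' \<in> B" "dim_cell t = 1" "dim_cell t' = 1" "0 < lam t" "lam t = lam t'"
  shows "lam' t = lam' t'"
  using is_LABEL_eq_transfer[OF L L' sub _ _ assms] theta_1cell_image by simp

end

section \<open>The reference labelling around a 1-cell\<close>

definition distinct_pair :: "nat \<Rightarrow> nat \<Rightarrow> nat set" where
  "distinct_pair p q = (if p \<noteq> q then {p, q} else {})"

lemma theta_two_upper_neighbours:
  assumes "Gamma T f = {w, w'}" "w \<noteq> w'" "0 < lam w" "0 < lam w'"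
  shows "theta T lam f = distinct_pair (lam w) (lam w')"
proof -
  have "\<And>l. {x \<in> Gamma T f. lam x = l} = (if lam w = l then {w} else {}) \<union> (if lam w' = l then {w'} else {})"
    using assms(1) by auto
  then have "\<And>l. card {x \<in> Gamma T f. lam x = l} = (if lam w = l then 1 else 0) + (if lam w' = l then 1 else 0)"
    using assms(2) by (auto simp: card_insert_if)
  then show ?thesis unfolding theta_def distinct_pair_def using assms(3,4) by (auto split: if_splits)
qed

text \<open>The four voxels around a 1-cell form a cycle \<open>c\<^sub>1 c\<^sub>2 c\<^sub>3 c\<^sub>4\<close>, and the \<open>\<theta>\<close> of the
  face between \<open>c\<^sub>i\<close> and \<open>c\<^sub>i\<^sub>+\<^sub>1\<close> is \<open>distinct_pair c\<^sub>i c\<^sub>i\<^sub>+\<^sub>1\<close>.\<close>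

lemma distinct_pair_four_cycle:
  fixes c1 c2 c3 c4 :: nat
  defines "p1 \<equiv> distinct_pair c1 c2" and "p2 \<equiv> distinct_pair c2 c3"
    and "p3 \<equiv> distinct_pair c3 c4" and "p4 \<equiv> distinct_pair c4 c1"
  assumes unique: "(p1 \<noteq> {} \<and> p1 \<noteq> p2 \<and> p1 \<noteq> p3 \<and> p1 \<noteq> p4) \<or> (p2 \<noteq> {} \<and> p2 \<noteq> p1 \<and> p2 \<noteq> p3 \<and> p2 \<noteq> p4)
     \<or> (p3 \<noteq> {} \<and> p3 \<noteq> p1 \<and> p3 \<noteq> p2 \<and> p3 \<noteq> p4) \<or> (p4 \<noteq> {} \<and> p4 \<noteq> p1 \<and> p4 \<noteq> p2 \<and> p4 \<noteq> p3)"
    and repeated: "(p1 = p2 \<and> p1 \<noteq> {}) \<or> (p1 = p3 \<and> p1 \<noteq> {}) \<or> (p1 = p4 \<and> p1 \<noteq> {}) \<or>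
          (p2 = p3 \<and> p2 \<noteq> {}) \<or> (p2 = p4 \<and> p2 \<noteq> {}) \<or> (p3 = p4 \<and> p3 \<noteq> {})"
  shows False
  using unique repeated unfolding p1_def p2_def p3_def p4_def distinct_pair_def
  by (auto simp: doubleton_eq_iff split: if_splits)

lemma inj_on_four_cycle_labels:
  fixes lab :: "'a \<Rightarrow> nat" and th :: "'a \<Rightarrow> nat set"
  assumes G: "G = {f1,f2,f3,f4}" "distinct [f1,f2,f3,f4]"
    and th: "th f1 = distinct_pair c1 c2" "th f2 = distinct_pair c2 c3"
      "th f3 = distinct_pair c3 c4" "th f4 = distinct_pair c4 c1"
    and pos: "\<forall>f\<in>G. 0 < lab f \<longleftrightarrow> th f \<noteq> {}"
    and eq: "\<forall>f\<in>G. \<forall>f'\<in>G. 0 < lab f \<longrightarrow> (lab f = lab f' \<longleftrightarrow> th f = th f')"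
    and unique: "0 < l" "card {f\<in>G. lab f = l} = 1"
  shows "inj_on lab {f\<in>G. 0 < lab f}"
proof (rule inj_onI, rule ccontr)
  fix f f' assume f: "f \<in> {f\<in>G. 0 < lab f}" "f' \<in> {f\<in>G. 0 < lab f}" "lab f = lab f'" "f \<noteq> f'"
  obtain f0 where f0: "{f\<in>G. lab f = l} = {f0}" using unique(2) by (auto simp: card_1_singleton_iff)
  then have f0G: "f0 \<in> G" "lab f0 = l" by auto
  have th_f0: "th f0 \<noteq> {}" using bspec[OF pos f0G(1)] f0G(2) unique(1) by simp
  have other: "th g \<noteq> th f0" if g: "g \<in> G" "g \<noteq> f0" for g
  proof
    assume th_g: "th g = th f0"
    then have "0 < lab g" using bspec[OF pos g(1)] th_f0 by simp
    then have "lab g = lab f0" using bspec[OF bspec[OF eq g(1)] f0G(1)] th_g by simp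
    then have "g \<in> {f\<in>G. lab f = l}" using g(1) f0G(2) by simp
    then show False using f0 g(2) by simp
  qed
  have distinct: "f1 \<noteq> f2" "f1 \<noteq> f3" "f1 \<noteq> f4" "f2 \<noteq> f3" "f2 \<noteq> f4" "f3 \<noteq> f4" using G(2) by auto
  have inG: "f1 \<in> G" "f2 \<in> G" "f3 \<in> G" "f4 \<in> G" using G(1) by auto
  have "f0 = f1 \<or> f0 = f2 \<or> f0 = f3 \<or> f0 = f4" using f0G(1) G(1) by simp
  then have unique_th: "(th f1 \<noteq> {} \<and> th f1 \<noteq> th f2 \<and> th f1 \<noteq> th f3 \<and> th f1 \<noteq> th f4)
     \<or> (th f2 \<noteq> {} \<and> th f2 \<noteq> th f1 \<and> th f2 \<noteq> th f3 \<and> th f2 \<noteq> th f4)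
     \<or> (th f3 \<noteq> {} \<and> th f3 \<noteq> th f1 \<and> th f3 \<noteq> th f2 \<and> th f3 \<noteq> th f4)
     \<or> (th f4 \<noteq> {} \<and> th f4 \<noteq> th f1 \<and> th f4 \<noteq> th f2 \<and> th f4 \<noteq> th f3)"
  proof (elim disjE)
    assume "f0 = f1" then show ?thesis using other[OF inG(2)] other[OF inG(3)] other[OF inG(4)] th_f0 distinct by simp
  next
    assume "f0 = f2" then show ?thesis using other[OF inG(1)] other[OF inG(3)] other[OF inG(4)] th_f0 distinct by simp
  next
    assume "f0 = f3" then show ?thesis using other[OF inG(1)] other[OF inG(2)] other[OF inG(4)] th_f0 distinct by simp
  next
    assume "f0 = f4" then show ?thesis using other[OF inG(1)] other[OF inG(2)] other[OF inG(3)] th_f0 distinct by simp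
  qed
  have "th f = th f'" using bspec[OF bspec[OF eq, of f] , of f'] f by simp
  moreover have "th f \<noteq> {}" using bspec[OF pos, of f] f(1) by simp
  moreover have "f = f1 \<or> f = f2 \<or> f = f3 \<or> f = f4" "f' = f1 \<or> f' = f2 \<or> f' = f3 \<or> f' = f4"
    using f(1,2) G(1) by auto
  ultimately have "(th f1 = th f2 \<and> th f1 \<noteq> {}) \<or> (th f1 = th f3 \<and> th f1 \<noteq> {}) \<or> (th f1 = th f4 \<and> th f1 \<noteq> {}) \<or>
          (th f2 = th f3 \<and> th f2 \<noteq> {}) \<or> (th f2 = th f4 \<and> th f2 \<noteq> {}) \<or> (th f3 = th f4 \<and> th f3 \<noteq> {})"
    using f(4) by (elim disjE; simp)
  then show False using distinct_pair_four_cycle[OF unique_th[unfolded th]] unfolding th by blast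
qed

locale reference_LABEL =
  fixes T \<sigma> tau
  assumes odd_box: "odd_box T" and L: "is_LABEL T \<sigma> T tau"
    and voxels_pos: "\<forall>w\<in>T. dim_cell w = 3 \<longrightarrow> 0 < tau w"
begin

lemma inj_on_faces_of_cycle:
  assumes u: "u \<in> T" "dim_cell u = 1" "theta T tau u \<noteq> {}"
    and G: "Gamma T u = {f1,f2,f3,f4}" "distinct [f1,f2,f3,f4]"
    and g: "Gamma T f1 = {w1,w2}" "Gamma T f2 = {w2,w3}" "Gamma T f3 = {w3,w4}" "Gamma T f4 = {w4,w1}"
    and w: "w1 \<noteq> w2" "w2 \<noteq> w3" "w3 \<noteq> w4" "w4 \<noteq> w1"
  shows "inj_on tau {f \<in> Gamma T u. 0 < tau f}"
proof -
  have faces: "f \<in> T" "dim_cell f = 2" if "f \<in> Gamma T u" for f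
    using Gamma_memD[OF that] u(2) by simp_all
  have voxel: "0 < tau w" if "w \<in> Gamma T f" "f \<in> Gamma T u" for w f
    using voxels_pos Gamma_memD[OF that(1)] faces[OF that(2)] by simp
  have "f1 \<in> Gamma T u" "f3 \<in> Gamma T u" using G(1) by simp_all
  then have wp: "0 < tau w1" "0 < tau w2" "0 < tau w3" "0 < tau w4"
    using voxel g(1,3) by blast+
  have th: "theta T tau f1 = distinct_pair (tau w1) (tau w2)" "theta T tau f2 = distinct_pair (tau w2) (tau w3)"
    "theta T tau f3 = distinct_pair (tau w3) (tau w4)" "theta T tau f4 = distinct_pair (tau w4) (tau w1)"
    using theta_two_upper_neighbours[OF g(1) w(1) wp(1,2)] theta_two_upper_neighbours[OF g(2) w(2) wp(2,3)]
      theta_two_upper_neighbours[OF g(3) w(3) wp(3,4)] theta_two_upper_neighbours[OF g(4) w(4) wp(4,1)]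
    by auto
  have pos: "\<forall>f\<in>Gamma T u. 0 < tau f \<longleftrightarrow> theta T tau f \<noteq> {}"
    using is_LABEL_pos_iff[OF L] faces by blast
  have eq: "\<forall>f\<in>Gamma T u. \<forall>f'\<in>Gamma T u. 0 < tau f \<longrightarrow> (tau f = tau f' \<longleftrightarrow> theta T tau f = theta T tau f')"
  proof (intro ballI impI)
    fix f f' assume "f \<in> Gamma T u" "f' \<in> Gamma T u" "0 < tau f"
    then show "tau f = tau f' \<longleftrightarrow> theta T tau f = theta T tau f'"
      using is_LABEL_adjacent_eq_iff[OF L _ u(1), where s = f and s' = f' and j = 2] faces by simp
  qed
  obtain l where "l \<in> theta T tau u" using u(3) by blast
  then have "0 < l" "card {f \<in> Gamma T u. tau f = l} = 1" by (simp_all add: theta_def)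
  then show ?thesis by (rule inj_on_four_cycle_labels[where th = "theta T tau" and lab = tau, OF G th pos eq])
qed

lemma inj_on_positive_faces:
  assumes u: "u \<in> T" "dim_cell u = 1" "theta T tau u \<noteq> {}"
  shows "inj_on tau {f \<in> Gamma T u. 0 < tau f}"
proof -
  obtain a b c where u_eq: "u = (a,b,c)" by (cases u)
  note u' = u[unfolded u_eq]
  note Gamma_nbr = Gamma_odd_box[OF odd_box]
  note nbrs = odd_box_upper_neighbours[OF odd_box u'(1)]
  consider "odd a" "even b" "even c" | "even a" "odd b" "even c" | "even a" "even b" "odd c"
    using u'(2) by (auto simp: dim_cell_triple split: if_splits)
  then have "inj_on tau {f \<in> Gamma T (a,b,c). 0 < tau f}"
  proof cases
    case 1
    then have m: "(a,b+1,c) \<in> T" "(a,b,c+1) \<in> T" "(a,b-1,c) \<in> T" "(a,b,c-1) \<in> T"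
      using nbrs by auto
    show ?thesis
    proof (rule inj_on_faces_of_cycle[OF u'])
      show "Gamma T (a,b,c) = {(a,b+1,c),(a,b,c+1),(a,b-1,c),(a,b,c-1)}"
        using Gamma_nbr[OF u'(1)] 1 by auto
      show "Gamma T (a,b+1,c) = {(a,b+1,c-1),(a,b+1,c+1)}" using Gamma_nbr[OF m(1)] 1 by auto
      show "Gamma T (a,b,c+1) = {(a,b+1,c+1),(a,b-1,c+1)}" using Gamma_nbr[OF m(2)] 1 by auto
      show "Gamma T (a,b-1,c) = {(a,b-1,c+1),(a,b-1,c-1)}" using Gamma_nbr[OF m(3)] 1 by auto
      show "Gamma T (a,b,c-1) = {(a,b-1,c-1),(a,b+1,c-1)}" using Gamma_nbr[OF m(4)] 1 by auto
    qed auto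
  next
    case 2
    then have m: "(a+1,b,c) \<in> T" "(a,b,c+1) \<in> T" "(a-1,b,c) \<in> T" "(a,b,c-1) \<in> T"
      using nbrs by auto
    show ?thesis
    proof (rule inj_on_faces_of_cycle[OF u'])
      show "Gamma T (a,b,c) = {(a+1,b,c),(a,b,c+1),(a-1,b,c),(a,b,c-1)}"
        using Gamma_nbr[OF u'(1)] 2 by auto
      show "Gamma T (a+1,b,c) = {(a+1,b,c-1),(a+1,b,c+1)}" using Gamma_nbr[OF m(1)] 2 by auto
      show "Gamma T (a,b,c+1) = {(a+1,b,c+1),(a-1,b,c+1)}" using Gamma_nbr[OF m(2)] 2 by auto
      show "Gamma T (a-1,b,c) = {(a-1,b,c+1),(a-1,b,c-1)}" using Gamma_nbr[OF m(3)] 2 by auto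
      show "Gamma T (a,b,c-1) = {(a-1,b,c-1),(a+1,b,c-1)}" using Gamma_nbr[OF m(4)] 2 by auto
    qed auto
  next
    case 3
    then have m: "(a+1,b,c) \<in> T" "(a,b+1,c) \<in> T" "(a-1,b,c) \<in> T" "(a,b-1,c) \<in> T"
      using nbrs by auto
    show ?thesis
    proof (rule inj_on_faces_of_cycle[OF u'])
      show "Gamma T (a,b,c) = {(a+1,b,c),(a,b+1,c),(a-1,b,c),(a,b-1,c)}"
        using Gamma_nbr[OF u'(1)] 3 by auto
      show "Gamma T (a+1,b,c) = {(a+1,b-1,c),(a+1,b+1,c)}" using Gamma_nbr[OF m(1)] 3 by auto
      show "Gamma T (a,b+1,c) = {(a+1,b+1,c),(a-1,b+1,c)}" using Gamma_nbr[OF m(2)] 3 by auto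
      show "Gamma T (a-1,b,c) = {(a-1,b+1,c),(a-1,b-1,c)}" using Gamma_nbr[OF m(3)] 3 by auto
      show "Gamma T (a,b-1,c) = {(a-1,b-1,c),(a+1,b-1,c)}" using Gamma_nbr[OF m(4)] 3 by auto
    qed auto
  qed
  then show ?thesis by (simp add: u_eq)
qed

lemma theta_1cell_eq_face_labels:
  assumes u: "u \<in> T" "dim_cell u = 1" "theta T tau u \<noteq> {}"
  shows "theta T tau u = {tau s | s. s \<in> Gamma T u \<and> 0 < tau s}"
proof
  show "theta T tau u \<subseteq> {tau s | s. s \<in> Gamma T u \<and> 0 < tau s}"
    using theta_memD by blast
  show "{tau s | s. s \<in> Gamma T u \<and> 0 < tau s} \<subseteq> theta T tau u"
  proof clarify
    fix s assume s: "s \<in> Gamma T u" "0 < tau s"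
    then have "{x \<in> Gamma T u. tau x = tau s} = {s}"
      using inj_on_positive_faces[OF u] by (auto dest: inj_onD)
    then show "tau s \<in> theta T tau u" using s by (simp add: theta_def)
  qed
qed

end

section \<open>Steps 2 to 4 of the block-wise method\<close>

lemma equiv_closure_invariant:
  assumes "(x, y) \<in> equiv_closure R" and "\<And>a b. (a, b) \<in> R \<Longrightarrow> f a = f b"
  shows "f x = f y"
proof -
  have "(x, y) \<in> (R \<union> R\<inverse>)\<^sup>*" using assms(1) by (simp add: equiv_closure_def)
  then show ?thesis by (induction rule: rtrancl_induct) (use assms(2) in force)+
qed

lemma offset_add_num_classes_le:
  assumes "k < k'"
  shows "offset T lams Bs j k + num_classes T (lams k) (Bs ! k) j \<le> offset T lams Bs j k'"
proof -
  have "offset T lams Bs j k + num_classes T (lams k) (Bs ! k) j = offset T lams Bs j (Suc k)"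
    by (simp add: offset_def)
  also have "\<dots> \<le> offset T lams Bs j k'" unfolding offset_def
    by (rule sum_mono2) (use assms in auto)
  finally show ?thesis .
qed

locale blockwise_run = reference_LABEL T \<sigma> tau for T \<sigma> tau +
  fixes Bs lams r
  assumes blocks: "\<forall>k<length Bs. odd_box (Bs!k) \<and> Bs!k \<subseteq> T \<and> is_LABEL T \<sigma> (Bs!k) (lams k)"
    and cover: "\<forall>t\<in>T. \<exists>k<length Bs. t \<in> Bs!k"
    and rep: "\<forall>j\<in>{1,2}. is_set_rep (equiv_closure (uf_rel T lams Bs j)) (r j)"
begin

lemma nested_block: "k < length Bs \<Longrightarrow> nested_LABEL T \<sigma> (Bs!k) T (lams k) tau"
  unfolding nested_LABEL_def using blocks L by auto

lemma block_pos_iff: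
  assumes "k < length Bs" "t \<in> Bs!k" "dim_cell t \<in> {1,2}"
  shows "0 < lams k t \<longleftrightarrow> 0 < tau t"
proof -
  interpret nested_LABEL T \<sigma> "Bs!k" T "lams k" tau using nested_block[OF assms(1)] .
  show ?thesis using pos_1cell_iff[OF assms(2)] pos_2cell_iff[OF assms(2)] assms(3) by auto
qed

lemma block_eq_transfer:
  assumes "k < length Bs" "t \<in> Bs!k" "t' \<in> Bs!k" "dim_cell t = j" "dim_cell t' = j" "j \<in> {1,2}"
    and "0 < lams k t" "lams k t = lams k t'"
  shows "tau t = tau t'"
proof -
  interpret nested_LABEL T \<sigma> "Bs!k" T "lams k" tau using nested_block[OF assms(1)] .
  show ?thesis using eq_1cell_transfer[OF assms(2,3)] eq_2cell_transfer[OF assms(2,3)] assms(4-) by auto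
qed

lemma lab2_bounds:
  assumes "k < length Bs" "t \<in> Bs!k" "dim_cell t = j" "j \<in> {1,2}" "0 < lams k t"
  shows "offset T lams Bs j k < lab2 T lams Bs k t"
    and "lab2 T lams Bs k t \<le> offset T lams Bs j k + num_classes T (lams k) (Bs ! k) j"
proof -
  have "lams k t \<le> num_classes T (lams k) (Bs ! k) j"
    using is_LABEL_le_num_classes[of T \<sigma> "Bs!k" "lams k" t j] blocks assms by auto
  then show "offset T lams Bs j k < lab2 T lams Bs k t"
    and "lab2 T lams Bs k t \<le> offset T lams Bs j k + num_classes T (lams k) (Bs ! k) j"
    using assms by (auto simp: lab2_def)
qed

lemma lab2_inj:
  assumes k: "k < length Bs" "t \<in> Bs!k" "dim_cell t = j" "0 < lams k t"
    and k': "k' < length Bs" "t' \<in> Bs!k'" "dim_cell t' = j" "0 < lams k' t'"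
    and j: "j \<in> {1,2}" and eq: "lab2 T lams Bs k t = lab2 T lams Bs k' t'"
  shows "k = k'" and "lams k t = lams k' t'"
proof -
  note bounds = lab2_bounds[OF k(1-3) j k(4)] lab2_bounds[OF k'(1-3) j k'(4)]
  have "\<not> k < k'" using bounds offset_add_num_classes_le[of k k' T lams Bs j] eq by linarith
  moreover have "\<not> k' < k" using bounds offset_add_num_classes_le[of k' k T lams Bs j] eq by linarith
  ultimately show "k = k'" by simp
  then show "lams k t = lams k' t'" using eq k k' by (simp add: lab2_def)
qed

text \<open>A positive label after step 2 or 3 names a single reference class; \<open>decode j\<close> returns
  its reference label.\<close>

definition decode :: "nat \<Rightarrow> nat \<Rightarrow> nat" where
  "decode j x = (if x = 0 then 0 else
     tau (SOME t. \<exists>k<length Bs. t \<in> Bs!k \<and> dim_cell t = j \<and> 0 < lams k t \<and> lab2 T lams Bs k t = x))"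

lemma decode_lab2:
  assumes "k < length Bs" "t \<in> Bs!k" "dim_cell t = j" "j \<in> {1,2}" "0 < lams k t"
  shows "decode j (lab2 T lams Bs k t) = tau t"
proof -
  let ?x = "lab2 T lams Bs k t"
  define t' where "t' = (SOME t. \<exists>k<length Bs. t \<in> Bs!k \<and> dim_cell t = j \<and> 0 < lams k t \<and>
    lab2 T lams Bs k t = ?x)"
  have "\<exists>k'<length Bs. t' \<in> Bs!k' \<and> dim_cell t' = j \<and> 0 < lams k' t' \<and> lab2 T lams Bs k' t' = ?x"
    unfolding t'_def by (rule someI[of _ t]) (use assms in blast)
  then obtain k' where k': "k' < length Bs" "t' \<in> Bs!k'" "dim_cell t' = j" "0 < lams k' t'"
    "lab2 T lams Bs k' t' = ?x" by blast
  have "k' = k" "lams k' t' = lams k t"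
    using lab2_inj[OF k'(1-4) assms(1,2,3,5) assms(4) k'(5)] by simp_all
  then have "tau t' = tau t"
    using block_eq_transfer[OF assms(1) _ assms(2) k'(3) assms(3,4)] k'(2,4) by simp
  moreover have "0 < ?x" using assms(5) by (simp add: lab2_def)
  ultimately show ?thesis unfolding decode_def t'_def by simp
qed

lemma decode_uf_rel:
  assumes "j \<in> {1,2}" "(a, b) \<in> uf_rel T lams Bs j"
  shows "decode j a = decode j b"
  using assms decode_lab2 unfolding uf_rel_def by fastforce

abbreviation step3_label :: "cell \<Rightarrow> nat" where
  "step3_label \<equiv> lab3 T lams Bs r"

lemma decode_lab3:
  assumes t: "t \<in> T" "dim_cell t = j" "j \<in> {1,2}"
  shows "0 < step3_label t \<longleftrightarrow> 0 < tau t" and "decode j (step3_label t) = tau t"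
proof -
  have "(0 < step3_label t \<longleftrightarrow> 0 < tau t) \<and> decode j (step3_label t) = tau t"
  proof (cases "\<exists>k<length Bs. t \<in> Bs ! k \<and> 0 < lams k t")
    case True
    let ?k = "SOME k. k < length Bs \<and> t \<in> Bs ! k \<and> 0 < lams k t"
    have k: "?k < length Bs" "t \<in> Bs ! ?k" "0 < lams ?k t" using someI_ex[OF True] by auto
    let ?x = "lab2 T lams Bs ?k t"
    have L3_t: "step3_label t = r j ?x" unfolding lab3_def using True t by simp
    have rel: "(?x, r j ?x) \<in> equiv_closure (uf_rel T lams Bs j)"
      using rep t(3) unfolding is_set_rep_def by blast
    have "0 < ?x" using k(3) by (simp add: lab2_def)
    moreover have "(0 < a) = (0 < b)" if "(a, b) \<in> uf_rel T lams Bs j" for a b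
      using that unfolding uf_rel_def lab2_def by auto
    ultimately have "0 < step3_label t" using equiv_closure_invariant[OF rel, of "\<lambda>x. 0 < x"] L3_t by simp
    moreover have "decode j ?x = decode j (r j ?x)"
      by (rule equiv_closure_invariant[OF rel]) (rule decode_uf_rel[OF t(3)])
    then have "decode j (step3_label t) = tau t" using decode_lab2[OF k(1,2) t(2,3) k(3)] L3_t by simp
    moreover have "0 < tau t" using block_pos_iff[OF k(1,2)] k(3) t by simp
    ultimately show ?thesis by simp
  next
    case False
    then have "step3_label t = 0" unfolding lab3_def by (rule if_not_P)
    moreover obtain k where k: "k < length Bs" "t \<in> Bs ! k" using cover t(1) by blast
    moreover have "tau t = 0" using block_pos_iff[OF k] False k t by auto
    ultimately show ?thesis by (simp add: decode_def)
  qed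
  then show "0 < step3_label t \<longleftrightarrow> 0 < tau t" and "decode j (step3_label t) = tau t" by simp_all
qed

lemma decode_face_labels:
  assumes u: "u \<in> T" "dim_cell u = 1"
  shows "{tau s | s. s \<in> Gamma T u \<and> 0 < tau s} = decode 2 ` face_labels T step3_label u"
proof -
  have face: "(0 < step3_label s \<longleftrightarrow> 0 < tau s) \<and> decode 2 (step3_label s) = tau s" if "s \<in> Gamma T u" for s
    using decode_lab3[of s 2] Gamma_memD[OF that] u(2) by simp
  show ?thesis unfolding face_labels_def
  proof
    show "{tau s |s. s \<in> Gamma T u \<and> 0 < tau s} \<subseteq> decode 2 ` {step3_label s |s. s \<in> Gamma T u \<and> 0 < step3_label s}"
    proof clarify
      fix s assume "s \<in> Gamma T u" "0 < tau s"
      moreover have "0 < step3_label s" "tau s = decode 2 (step3_label s)" using face[of s] calculation by simp_all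
      ultimately show "tau s \<in> decode 2 ` {step3_label s |s. s \<in> Gamma T u \<and> 0 < step3_label s}" by blast
    qed
    show "decode 2 ` {step3_label s |s. s \<in> Gamma T u \<and> 0 < step3_label s} \<subseteq> {tau s |s. s \<in> Gamma T u \<and> 0 < tau s}"
    proof clarify
      fix s assume "s \<in> Gamma T u" "0 < step3_label s"
      moreover have "0 < tau s" "decode 2 (step3_label s) = tau s" using face[of s] calculation by simp_all
      ultimately show "\<exists>s'. decode 2 (step3_label s) = tau s' \<and> s' \<in> Gamma T u \<and> 0 < tau s'" by blast
    qed
  qed
qed

lemma merge_pairs_sound:
  assumes t0: "t0 \<in> T" "dim_cell t0 = 0" and uv: "u \<in> Gamma T t0" "v \<in> Gamma T t0"
    and pos: "0 < step3_label u" "0 < step3_label v" and faces: "face_labels T step3_label u = face_labels T step3_label v"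
  shows "tau u = tau v"
proof -
  have uT: "u \<in> T" "dim_cell u = 1" "v \<in> T" "dim_cell v = 1"
    using uv Gamma_memD t0 by auto
  have tau_pos: "0 < tau u" "0 < tau v" using decode_lab3(1)[of u 1] decode_lab3(1)[of v 1] uT pos by auto
  then have theta: "theta T tau u \<noteq> {}" "theta T tau v \<noteq> {}"
    using is_LABEL_pos_iff[OF L, of u 1] is_LABEL_pos_iff[OF L, of v 1] uT by auto
  have "theta T tau u = {tau s | s. s \<in> Gamma T u \<and> 0 < tau s}"
    using theta_1cell_eq_face_labels[OF uT(1,2) theta(1)] .
  also have "\<dots> = decode 2 ` face_labels T step3_label v"
    using decode_face_labels[OF uT(1,2)] faces by simp
  also have "\<dots> = theta T tau v"
    using decode_face_labels[OF uT(3,4)] theta_1cell_eq_face_labels[OF uT(3,4) theta(2)] by simp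
  finally have "theta T tau u = theta T tau v" .
  moreover have "(1::nat) \<in> {0,1,2}" by simp
  ultimately show ?thesis
    using is_LABEL_adjacent_eq_iff[OF L _ t0(1) uv uT(1,3,2) tau_pos(1)] by blast
qed

lemma step4_fold_decode:
  assumes "set xs \<subseteq> {t \<in> T. dim_cell t = 0}" and "\<And>x y. (x, y) \<in> M \<Longrightarrow> decode 1 x = decode 1 y"
    and "(x, y) \<in> fold (\<lambda>t0 M. step4 T step3_label M t0) xs M"
  shows "decode 1 x = decode 1 y"
  using assms
proof (induction xs arbitrary: M)
  case Nil
  then show ?case by simp
next
  case (Cons t0 xs)
  have t0: "t0 \<in> T" "dim_cell t0 = 0" using Cons.prems(1) by auto
  have merged: "decode 1 x = decode 1 y" if xy: "(x, y) \<in> merge_pairs T step3_label M t0" for x y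
  proof -
    obtain u v where uv: "x = step3_label u" "y = step3_label v" "once_in T step3_label M t0 u" "once_in T step3_label M t0 v"
        "face_labels T step3_label u = face_labels T step3_label v"
      using xy unfolding merge_pairs_def by blast
    have g: "u \<in> Gamma T t0" "v \<in> Gamma T t0" "0 < step3_label u" "0 < step3_label v"
      using uv(3,4) unfolding once_in_def by auto
    then have "u \<in> T" "dim_cell u = 1" "v \<in> T" "dim_cell v = 1"
      using Gamma_memD t0 by auto
    then show ?thesis
      using merge_pairs_sound[OF t0 g uv(5)] decode_lab3(2)[of u 1] decode_lab3(2)[of v 1] uv(1,2)
      by simp
  qed
  show ?case
  proof (rule Cons.IH)
    show "set xs \<subseteq> {t \<in> T. dim_cell t = 0}" using Cons.prems(1) by simp
    show "(x, y) \<in> fold (\<lambda>t0 M. step4 T step3_label M t0) xs (step4 T step3_label M t0)" using Cons.prems(3) by simp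
  next
    fix a b assume "(a, b) \<in> step4 T step3_label M t0"
    then show "decode 1 a = decode 1 b"
      unfolding step4_def by (rule equiv_closure_invariant) (use Cons.prems(2) merged in blast)
  qed
qed

end

section \<open>Block decompositions of the grid\<close>

lemma odd_box_tgrid: "odd_box (tgrid n1 n2 n3)"
  unfolding odd_box_def tgrid_def
  by (rule exI[of _ 1], rule exI[of _ "2 * int n1 - 1"], rule exI[of _ 1], rule exI[of _ "2 * int n2 - 1"],
      rule exI[of _ 1], rule exI[of _ "2 * int n3 - 1"]) presburger

lemma valid_cuts_nth:
  assumes "valid_cuts N c" "i < length c"
  shows "1 \<le> c ! i" and "c ! i \<le> N" and "odd (c ! i)"
proof -
  have sorted: "sorted_wrt (<) c" and len: "2 \<le> length c" and "hd c = 1" "last c = N"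
    using assms(1) unfolding valid_cuts_def by auto
  moreover have "c \<noteq> []" using len by auto
  ultimately have first: "c ! 0 = 1" and last: "c ! (length c - 1) = N"
    by (simp_all add: hd_conv_nth last_conv_nth)
  show "1 \<le> c ! i"
  proof (cases "i = 0")
    case False
    then show ?thesis using sorted_wrt_nth_less[OF sorted, of 0 i] assms(2) first by auto
  qed (use first in simp)
  show "c ! i \<le> N"
  proof (cases "i = length c - 1")
    case False
    then have "i < length c - 1" using assms(2) by simp
    moreover have "length c - 1 < length c" using len by simp
    ultimately show ?thesis using sorted_wrt_nth_less[OF sorted, of i "length c - 1"] last by simp
  qed (use last in simp)
  show "odd (c ! i)" using assms unfolding valid_cuts_def by auto
qed

lemma valid_cuts_cover:
  assumes "valid_cuts N c" "1 \<le> x" "x \<le> N"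
  shows "\<exists>k. 0 < k \<and> k < length c \<and> c ! (k - 1) \<le> x \<and> x \<le> c ! k"
proof -
  have sorted: "sorted_wrt (<) c" and len: "2 \<le> length c" and "hd c = 1" "last c = N"
    using assms(1) unfolding valid_cuts_def by auto
  moreover have "c \<noteq> []" using len by auto
  ultimately have first: "c ! 0 = 1" and last: "c ! (length c - 1) = N"
    by (simp_all add: hd_conv_nth last_conv_nth)
  define k0 where "k0 = (LEAST k. x \<le> c ! k)"
  have above: "x \<le> c ! k0" unfolding k0_def by (rule LeastI[of _ "length c - 1"]) (use last assms in simp)
  have "k0 \<le> length c - 1" unfolding k0_def by (rule Least_le) (use last assms in simp)
  show ?thesis
  proof (cases "k0 = 0")
    case True
    then have "x = 1" using above first assms(2) by simp
    moreover have "1 < c ! 1" using sorted_wrt_nth_less[OF sorted, of 0 1] len first by auto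
    ultimately show ?thesis using first len by (intro exI[of _ 1]) auto
  next
    case False
    have "\<not> x \<le> c ! (k0 - 1)" unfolding k0_def by (rule not_less_Least) (use False k0_def in simp)
    then show ?thesis using False above \<open>k0 \<le> length c - 1\<close> len by (intro exI[of _ k0]) auto
  qed
qed

lemma block_family_odd_box_subset:
  assumes cuts: "valid_cuts (2 * int n1 - 1) c1" "valid_cuts (2 * int n2 - 1) c2"
      "valid_cuts (2 * int n3 - 1) c3"
    and "B \<in> block_family c1 c2 c3"
  shows "odd_box B" and "B \<subseteq> tgrid n1 n2 n3"
proof -
  obtain k1 k2 k3 where
    B: "B = {c1 ! (k1 - 1) .. c1 ! k1} \<times> {c2 ! (k2 - 1) .. c2 ! k2} \<times> {c3 ! (k3 - 1) .. c3 ! k3}"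
    and k: "0 < k1" "k1 < length c1" "0 < k2" "k2 < length c2" "0 < k3" "k3 < length c3"
    using assms(4) unfolding block_family_def mem_Collect_eq by (elim exE conjE) blast
  have k': "k1 - 1 < length c1" "k2 - 1 < length c2" "k3 - 1 < length c3" using k by auto
  note b1 = valid_cuts_nth[OF cuts(1) k(2)] valid_cuts_nth[OF cuts(1) k'(1)]
  note b2 = valid_cuts_nth[OF cuts(2) k(4)] valid_cuts_nth[OF cuts(2) k'(2)]
  note b3 = valid_cuts_nth[OF cuts(3) k(6)] valid_cuts_nth[OF cuts(3) k'(3)]
  show "odd_box B" unfolding odd_box_def B
    by (rule exI[of _ "c1 ! (k1 - 1)"], rule exI[of _ "c1 ! k1"], rule exI[of _ "c2 ! (k2 - 1)"],
        rule exI[of _ "c2 ! k2"], rule exI[of _ "c3 ! (k3 - 1)"], rule exI[of _ "c3 ! k3"])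
      (use b1 b2 b3 in simp)
  show "B \<subseteq> tgrid n1 n2 n3" unfolding B tgrid_def using b1 b2 b3 by auto
qed

lemma block_family_cover:
  assumes cuts: "valid_cuts (2 * int n1 - 1) c1" "valid_cuts (2 * int n2 - 1) c2"
      "valid_cuts (2 * int n3 - 1) c3"
    and t: "t \<in> tgrid n1 n2 n3"
  shows "\<exists>B\<in>block_family c1 c2 c3. t \<in> B"
proof -
  obtain x y z where t_eq: "t = (x, y, z)" by (cases t)
  have r: "1 \<le> x" "x \<le> 2 * int n1 - 1" "1 \<le> y" "y \<le> 2 * int n2 - 1" "1 \<le> z" "z \<le> 2 * int n3 - 1"
    using t t_eq unfolding tgrid_def by simp_all
  obtain k1 where k1: "0 < k1" "k1 < length c1" "c1 ! (k1 - 1) \<le> x" "x \<le> c1 ! k1"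
    using valid_cuts_cover[OF cuts(1) r(1,2)] by blast
  obtain k2 where k2: "0 < k2" "k2 < length c2" "c2 ! (k2 - 1) \<le> y" "y \<le> c2 ! k2"
    using valid_cuts_cover[OF cuts(2) r(3,4)] by blast
  obtain k3 where k3: "0 < k3" "k3 < length c3" "c3 ! (k3 - 1) \<le> z" "z \<le> c3 ! k3"
    using valid_cuts_cover[OF cuts(3) r(5,6)] by blast
  let ?B = "{c1 ! (k1 - 1) .. c1 ! k1} \<times> {c2 ! (k2 - 1) .. c2 ! k2} \<times> {c3 ! (k3 - 1) .. c3 ! k3}"
  have "?B \<in> block_family c1 c2 c3" unfolding block_family_def
    by (rule CollectI, rule exI[of _ k1], rule exI[of _ k2], rule exI[of _ k3], rule conjI[OF refl])
      (use k1 k2 k3 in simp)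
  moreover have "t \<in> ?B" unfolding t_eq using k1(3,4) k2(3,4) k3(3,4) by simp
  ultimately show ?thesis by (rule bexI[rotated])
qed

lemma is_LABEL_tgrid_voxels_pos:
  assumes seg: "segment_label_map (grid n1 n2 n3) \<sigma>"
    and L: "is_LABEL (tgrid n1 n2 n3) \<sigma> (tgrid n1 n2 n3) tau"
    and w: "w \<in> tgrid n1 n2 n3" "dim_cell w = 3"
  shows "0 < tau w"
proof -
  obtain a b c where w_eq: "w = (a, b, c)" by (cases w)
  have "1 \<le> a" "a \<le> 2 * int n1 - 1" "1 \<le> b" "b \<le> 2 * int n2 - 1" "1 \<le> c" "c \<le> 2 * int n3 - 1"
    using w(1) w_eq unfolding tgrid_def by simp_all
  then have "1 \<le> (a + 1) div 2" "(a + 1) div 2 \<le> int n1" "1 \<le> (b + 1) div 2" "(b + 1) div 2 \<le> int n2"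
    "1 \<le> (c + 1) div 2" "(c + 1) div 2 \<le> int n3"
    by presburger+
  then have "voxel_of w \<in> grid n1 n2 n3" unfolding w_eq voxel_of_def grid_def by simp
  then have "1 \<le> \<sigma> (voxel_of w)" using seg unfolding segment_label_map_def by blast
  then show ?thesis using is_LABEL_3cell[OF L w] by simp
qed

lemma blockwise_run_tgrid:
  assumes seg: "segment_label_map (grid n1 n2 n3) \<sigma>"
    and L: "is_LABEL (tgrid n1 n2 n3) \<sigma> (tgrid n1 n2 n3) tau"
    and cuts: "valid_cuts (2 * int n1 - 1) c1" "valid_cuts (2 * int n2 - 1) c2"
      "valid_cuts (2 * int n3 - 1) c3"
    and Bs: "set Bs = block_family c1 c2 c3"
    and lams: "\<forall>k<length Bs. is_LABEL (tgrid n1 n2 n3) \<sigma> (Bs ! k) (lams k)"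
    and rep: "\<forall>j\<in>{1, 2}. is_set_rep (equiv_closure (uf_rel (tgrid n1 n2 n3) lams Bs j)) (r j)"
  shows "blockwise_run (tgrid n1 n2 n3) \<sigma> tau Bs lams r"
proof unfold_locales
  show "odd_box (tgrid n1 n2 n3)" by (rule odd_box_tgrid)
  show "is_LABEL (tgrid n1 n2 n3) \<sigma> (tgrid n1 n2 n3) tau" by (rule L)
  show "\<forall>w\<in>tgrid n1 n2 n3. dim_cell w = 3 \<longrightarrow> 0 < tau w"
    using is_LABEL_tgrid_voxels_pos[OF seg L] by blast
  show "\<forall>k<length Bs. odd_box (Bs ! k) \<and> Bs ! k \<subseteq> tgrid n1 n2 n3 \<and>
      is_LABEL (tgrid n1 n2 n3) \<sigma> (Bs ! k) (lams k)"
  proof (intro allI impI)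
    fix k assume k: "k < length Bs"
    then have "Bs ! k \<in> block_family c1 c2 c3" using Bs nth_mem by blast
    then show "odd_box (Bs ! k) \<and> Bs ! k \<subseteq> tgrid n1 n2 n3 \<and> is_LABEL (tgrid n1 n2 n3) \<sigma> (Bs ! k) (lams k)"
      using block_family_odd_box_subset[OF cuts] lams k by blast
  qed
  show "\<forall>t\<in>tgrid n1 n2 n3. \<exists>k<length Bs. t \<in> Bs ! k"
  proof
    fix t assume "t \<in> tgrid n1 n2 n3"
    then obtain B where "B \<in> set Bs" "t \<in> B" using block_family_cover[OF cuts] Bs by blast
    then show "\<exists>k<length Bs. t \<in> Bs ! k" by (metis in_set_conv_nth)
  qed
  show "\<forall>j\<in>{1, 2}. is_set_rep (equiv_closure (uf_rel (tgrid n1 n2 n3) lams Bs j)) (r j)"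
    by (rule rep)
qed

theorem proposition5:
  fixes n1 n2 n3 :: nat and \<sigma> tau tau' :: "cell \<Rightarrow> nat"
  assumes "1 \<le> n1" and "1 \<le> n2" and "1 \<le> n3"
    and "segment_label_map (grid n1 n2 n3) \<sigma>"
    and "is_LABEL (tgrid n1 n2 n3) \<sigma> (tgrid n1 n2 n3) tau"
    and "blockwise_output n1 n2 n3 \<sigma> tau'"
  shows "\<forall>u\<in>tgrid n1 n2 n3. \<forall>v\<in>tgrid n1 n2 n3.
           dim_cell u = 1 \<and> dim_cell v = 1 \<and> tau' u = tau' v \<longrightarrow> tau u = tau v"
proof -
  let ?T = "tgrid n1 n2 n3"
  obtain c1 c2 c3 Bs lams r order r4 where
    cuts: "valid_cuts (2 * int n1 - 1) c1" "valid_cuts (2 * int n2 - 1) c2" "valid_cuts (2 * int n3 - 1) c3"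
    and Bs: "set Bs = block_family c1 c2 c3"
    and lams: "\<forall>k<length Bs. is_LABEL ?T \<sigma> (Bs ! k) (lams k)"
    and rep: "\<forall>j\<in>{1, 2}. is_set_rep (equiv_closure (uf_rel ?T lams Bs j)) (r j)"
    and order: "set order = {t \<in> ?T. dim_cell t = 0}"
    and r4: "is_set_rep (fold (\<lambda>t0 M. step4 ?T (lab3 ?T lams Bs r) M t0) order Id) r4"
    and tau': "\<forall>u\<in>?T. dim_cell u = 1 \<longrightarrow> tau' u = r4 (lab3 ?T lams Bs r u)"
    using assms(6) unfolding blockwise_output_def Let_def by blast
  interpret blockwise_run ?T \<sigma> tau Bs lams r
    using blockwise_run_tgrid[OF assms(4,5) cuts Bs lams rep] .
  have decode_r4: "decode 1 (r4 x) = decode 1 x" for x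
  proof -
    have "(x, r4 x) \<in> fold (\<lambda>t0 M. step4 ?T step3_label M t0) order Id"
      using r4 unfolding is_set_rep_def by blast
    then show ?thesis using step4_fold_decode[of order Id] order by fastforce
  qed
  show ?thesis
  proof (intro ballI impI)
    fix u v assume uv: "u \<in> ?T" "v \<in> ?T" "dim_cell u = 1 \<and> dim_cell v = 1 \<and> tau' u = tau' v"
    have "tau u = decode 1 (r4 (step3_label u))" using decode_lab3(2)[of u 1] decode_r4 uv by simp
    also have "\<dots> = decode 1 (r4 (step3_label v))"
      using tau' uv by (metis (mono_tags, lifting))
    also have "\<dots> = tau v" using decode_lab3(2)[of v 1] decode_r4 uv by simp
    finally show "tau u = tau v" .
  qed
qed

end
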